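(* Let $\mathcal R_f,\mathcal R_g$ be constructible Reeb graphs. Then $d_{FD}(\mathcal R_f,\mathcal R_g)=\infty$ if and only if $\mathcal R_f$ and $\mathcal R_g$ have different numbers of path-connected components.
   Context: Reeb graph $\mathcal R_f=(\mathbb X_f,\tilde f)$: quotient of a scalar field identifying points in the same path component of a level set; constructible = built from finitely many compact locally path-connected slices over critical values (a finite graph, possibly disconnected). $d_f(u,v)=\min_{\pi:u\to v}(\max_\pi\tilde f-\min_\pi\tilde f)$ over continuous paths, with $d_f(u,v)=\infty$ when no path exists. $d_{FD}(\mathcal R_f,\mathcal R_g)=\inf_{\Phi,\Psi}\max\{D(\Phi,\Psi),\|\tilde f-\tilde g\circ\Phi\|_\infty,\|\tilde f\circ\Psi-\tilde g\|_\infty\}$ over continuous $\Phi:\mathcal R_f\to\mathcal R_g,\Psi:\mathcal R_g\to\mathcal R_f$, where $D(\Phi,\Psi)=\sup\tfrac12|d_f(x,x')-d_g(y,y')|$ over pairs in $\{(x,\Phi(x))\}\cup\{(\Psi(y),y)\}$. *)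

theory Defs
  imports "HOL-Analysis.Analysis"
begin

text \<open>The Reeb graph space is the
geometric realization (quotient of the discrete vertex set and one copy of [0,1] per
edge), and the function is the height, interpolated linearly along edges.\<close>

record ('v, 'e) rgraph =
  verts :: "'v set"
  edges :: "'e set"
  ht    :: "'v \<Rightarrow> real"
  lo    :: "'e \<Rightarrow> 'v"
  hi    :: "'e \<Rightarrow> 'v"

definition constructible_reeb :: "('v, 'e) rgraph \<Rightarrow> bool" where
  "constructible_reeb G \<longleftrightarrow> finite (verts G) \<and> finite (edges G) \<and>
     (\<forall>e \<in> edges G. lo G e \<in> verts G \<and> hi G e \<in> verts G \<and> ht G (lo G e) < ht G (hi G e))"

definition reeb_space :: "('v, 'e) rgraph \<Rightarrow> ('v + 'e \<times> real) set" where
  "reeb_space G = Inl ` verts G \<union> Inr ` (edges G \<times> {0<..<1})"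

definition edge_map :: "('v, 'e) rgraph \<Rightarrow> 'e \<Rightarrow> real \<Rightarrow> 'v + 'e \<times> real" where
  "edge_map G e t = (if t \<le> 0 then Inl (lo G e) else if 1 \<le> t then Inl (hi G e) else Inr (e, t))"

text \<open>Quotient topology: U is open iff its preimage in every edge [0,1] is open
(the vertex set carries the discrete topology).\<close>
definition reeb_top :: "('v, 'e) rgraph \<Rightarrow> ('v + 'e \<times> real) topology" where
  "reeb_top G = topology (\<lambda>U. U \<subseteq> reeb_space G \<and>
     (\<forall>e \<in> edges G. openin (top_of_set {0..1}) {t \<in> {0..1}. edge_map G e t \<in> U}))"

definition reeb_fun :: "('v, 'e) rgraph \<Rightarrow> 'v + 'e \<times> real \<Rightarrow> real" where
  "reeb_fun G x = (case x of Inl v \<Rightarrow> ht G v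
     | Inr (e, t) \<Rightarrow> (1 - t) * ht G (lo G e) + t * ht G (hi G e))"

definition reeb_dist :: "('v, 'e) rgraph \<Rightarrow> 'v + 'e \<times> real \<Rightarrow> 'v + 'e \<times> real \<Rightarrow> ereal" where
  "reeb_dist G u v =
     (INF p \<in> {p. pathin (reeb_top G) p \<and> p 0 = u \<and> p 1 = v}.
        ereal ((SUP t \<in> {0..1}. reeb_fun G (p t)) - (INF t \<in> {0..1}. reeb_fun G (p t))))"

text \<open>Absolute difference of extended reals, with the convention |\<infinity> - \<infinity>| = 0.\<close>
definition ediff :: "ereal \<Rightarrow> ereal \<Rightarrow> ereal" where
  "ediff a b = (if a = b then 0 else \<bar>a - b\<bar>)"

definition distortion ::
  "('v, 'e) rgraph \<Rightarrow> ('w, 'd) rgraph \<Rightarrow> ('v + 'e \<times> real \<Rightarrow> 'w + 'd \<times> real)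
     \<Rightarrow> ('w + 'd \<times> real \<Rightarrow> 'v + 'e \<times> real) \<Rightarrow> ereal" where
  "distortion G H \<Phi> \<Psi> =
     (let C = {(x, \<Phi> x) | x. x \<in> topspace (reeb_top G)} \<union> {(\<Psi> y, y) | y. y \<in> topspace (reeb_top H)}
      in SUP (p, q) \<in> C \<times> C. ediff (reeb_dist G (fst p) (fst q)) (reeb_dist H (snd p) (snd q)) / 2)"

definition fd_dist :: "('v, 'e) rgraph \<Rightarrow> ('w, 'd) rgraph \<Rightarrow> ereal" where
  "fd_dist G H =
     (INF (\<Phi>, \<Psi>) \<in> {(\<Phi>, \<Psi>). continuous_map (reeb_top G) (reeb_top H) \<Phi> \<and>
                              continuous_map (reeb_top H) (reeb_top G) \<Psi>}.
        max (distortion G H \<Phi> \<Psi>)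
          (max (SUP x \<in> topspace (reeb_top G). ereal \<bar>reeb_fun G x - reeb_fun H (\<Phi> x)\<bar>)
               (SUP y \<in> topspace (reeb_top H). ereal \<bar>reeb_fun G (\<Psi> y) - reeb_fun H y\<bar>)))"

end

theory Submission
  imports Defs
begin

text \<open>The distance \<open>d\<^sub>f\<close> is infinite exactly between points of different path components,
and all finite distances, like all height differences, are bounded by a constant depending only
on the two graphs. So a pair of maps \<open>(\<Phi>, \<Psi>)\<close> has finite cost iff its correspondence relates
points of a common component only to points of a common component. Such maps induce mutually
injective maps between the finitely many path components, hence equal numbers of them.
Conversely, a bijection between the components is realised by maps that are constant on each
component; these are continuous because the path components of a finite graph are open.\<close>

definition correspondence ::
  "'a topology \<Rightarrow> 'b topology \<Rightarrow> ('a \<Rightarrow> 'b) \<Rightarrow> ('b \<Rightarrow> 'a) \<Rightarrow> ('a \<times> 'b) set" where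
  "correspondence X Y \<Phi> \<Psi> = {(x, \<Phi> x) | x. x \<in> topspace X} \<union> {(\<Psi> y, y) | y. y \<in> topspace Y}"

definition path_components_agree :: "'a topology \<Rightarrow> 'b topology \<Rightarrow> ('a \<times> 'b) set \<Rightarrow> bool" where
  "path_components_agree X Y C \<longleftrightarrow>
     (\<forall>(x, y) \<in> C. \<forall>(x', y') \<in> C. path_component_of X x x' \<longleftrightarrow> path_component_of Y y y')"

lemma path_components_agreeD:
  assumes "path_components_agree X Y C" "(x, y) \<in> C" "(x', y') \<in> C"
  shows "path_component_of X x x' \<longleftrightarrow> path_component_of Y y y'"
  using assms unfolding path_components_agree_def by blast

lemma path_component_of_set_eq_iff:
  assumes "x \<in> topspace X" "x' \<in> topspace X"
  shows "path_component_of_set X x = path_component_of_set X x' \<longleftrightarrow> path_component_of X x x'"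
  using assms by (metis mem_Collect_eq path_component_of_equiv path_component_of_refl)

lemma path_components_of_eq_path_component_of_set:
  assumes "C \<in> path_components_of X" "x \<in> C"
  shows "path_component_of_set X x = C"
  using assms by (auto simp: path_components_of_def path_component_of_equiv)

lemma card_path_components_of_le:
  assumes maps: "\<And>x. x \<in> topspace X \<Longrightarrow> f x \<in> topspace Y"
    and reflects: "\<And>x x'. \<lbrakk>x \<in> topspace X; x' \<in> topspace X; path_component_of Y (f x) (f x')\<rbrakk>
                     \<Longrightarrow> path_component_of X x x'"
    and "finite (path_components_of Y)"
  shows "card (path_components_of X) \<le> card (path_components_of Y)"
proof -
  define rep where "rep C = (SOME x. x \<in> C)" for C :: "'a set"
  have rep: "rep C \<in> C" "rep C \<in> topspace X" if "C \<in> path_components_of X" for C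
  proof -
    show "rep C \<in> C"
      using nonempty_path_components_of[OF that] unfolding rep_def by (simp add: some_in_eq)
    then show "rep C \<in> topspace X"
      using path_components_of_subset[OF that] by blast
  qed
  define h where "h C = path_component_of_set Y (f (rep C))" for C
  have "h ` path_components_of X \<subseteq> path_components_of Y"
    using rep maps by (auto simp: h_def path_component_in_path_components_of)
  moreover have "inj_on h (path_components_of X)"
  proof
    fix C C' assume C: "C \<in> path_components_of X" and C': "C' \<in> path_components_of X"
      and "h C = h C'"
    then have "path_component_of X (rep C) (rep C')"
      using rep maps reflects by (simp add: h_def path_component_of_set_eq_iff)
    then have "path_component_of_set X (rep C) = path_component_of_set X (rep C')"
      using C C' rep by (simp add: path_component_of_set_eq_iff)
    then show "C = C'"
      using C C' rep by (simp add: path_components_of_eq_path_component_of_set)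
  qed
  ultimately show ?thesis
    using assms(3) by (intro card_inj_on_le)
qed

lemma card_path_components_of_eq_if_agree:
  assumes "\<And>x. x \<in> topspace X \<Longrightarrow> \<Phi> x \<in> topspace Y" "\<And>y. y \<in> topspace Y \<Longrightarrow> \<Psi> y \<in> topspace X"
    and agree: "path_components_agree X Y (correspondence X Y \<Phi> \<Psi>)"
    and "finite (path_components_of X)" "finite (path_components_of Y)"
  shows "card (path_components_of X) = card (path_components_of Y)"
proof (rule antisym)
  show "card (path_components_of X) \<le> card (path_components_of Y)"
  proof (rule card_path_components_of_le[where f = \<Phi>])
    fix x x' assume "x \<in> topspace X" "x' \<in> topspace X" "path_component_of Y (\<Phi> x) (\<Phi> x')"
    then show "path_component_of X x x'"
      using path_components_agreeD[OF agree, of x "\<Phi> x" x' "\<Phi> x'"] by (simp add: correspondence_def)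
  qed (use assms in auto)
  show "card (path_components_of Y) \<le> card (path_components_of X)"
  proof (rule card_path_components_of_le[where f = \<Psi>])
    fix y y' assume "y \<in> topspace Y" "y' \<in> topspace Y" "path_component_of X (\<Psi> y) (\<Psi> y')"
    then show "path_component_of Y y y'"
      using path_components_agreeD[OF agree, of "\<Psi> y" y "\<Psi> y'" y'] by (simp add: correspondence_def)
  qed (use assms in auto)
qed

lemma continuous_map_constant_on_path_components:
  assumes "\<And>x. openin X (path_component_of_set X x)"
    and "\<And>x. x \<in> topspace X \<Longrightarrow> f x \<in> topspace Y"
    and "\<And>x x'. path_component_of X x x' \<Longrightarrow> f x' = f x"
  shows "continuous_map X Y f"
  unfolding continuous_map_def
proof (intro conjI allI impI)
  show "f \<in> topspace X \<rightarrow> topspace Y"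
    using assms(2) by auto
  fix V
  show "openin X {x \<in> topspace X. f x \<in> V}"
  proof (subst openin_subopen, intro ballI)
    fix x assume x: "x \<in> {x \<in> topspace X. f x \<in> V}"
    then have "path_component_of_set X x \<subseteq> {x \<in> topspace X. f x \<in> V}"
      using assms(3) path_component_in_topspace by fastforce
    moreover have "x \<in> path_component_of_set X x"
      using x by (simp add: path_component_of_refl)
    ultimately show "\<exists>T. openin X T \<and> x \<in> T \<and> T \<subseteq> {x \<in> topspace X. f x \<in> V}"
      using assms(1) by blast
  qed
qed

lemma continuous_map_into_path_components:
  assumes "\<And>x. openin X (path_component_of_set X x)"
    and \<sigma>: "\<sigma> \<in> path_components_of X \<rightarrow> path_components_of Y"
  obtains \<Phi> where "continuous_map X Y \<Phi>"
    "\<And>x. x \<in> topspace X \<Longrightarrow> \<Phi> x \<in> topspace Y \<and> path_component_of_set Y (\<Phi> x) = \<sigma> (path_component_of_set X x)"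
proof -
  define \<Phi> where "\<Phi> x = (SOME y. y \<in> \<sigma> (path_component_of_set X x))" for x
  have \<Phi>: "\<Phi> x \<in> topspace Y \<and> path_component_of_set Y (\<Phi> x) = \<sigma> (path_component_of_set X x)"
    if "x \<in> topspace X" for x
  proof -
    have C: "\<sigma> (path_component_of_set X x) \<in> path_components_of Y"
      using that \<sigma> by (auto simp: path_component_in_path_components_of)
    then have "\<Phi> x \<in> \<sigma> (path_component_of_set X x)"
      using nonempty_path_components_of unfolding \<Phi>_def by (simp add: some_in_eq)
    then show ?thesis
      using path_components_of_subset[OF C] path_components_of_eq_path_component_of_set[OF C] by blast
  qed
  have "continuous_map X Y \<Phi>"
  proof (rule continuous_map_constant_on_path_components)
    show "openin X (path_component_of_set X x)" for x
      by (rule assms(1))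
    show "\<Phi> x \<in> topspace Y" if "x \<in> topspace X" for x
      using \<Phi>[OF that] by blast
    fix x x' assume "path_component_of X x x'"
    then have "path_component_of X x = path_component_of X x'"
      by (simp add: path_component_of_equiv)
    then show "\<Phi> x' = \<Phi> x"
      by (simp add: \<Phi>_def)
  qed
  with \<Phi> show thesis
    using that by blast
qed

lemma exists_maps_with_agreeing_path_components:
  assumes "\<And>x. openin X (path_component_of_set X x)" "\<And>y. openin Y (path_component_of_set Y y)"
    and "finite (path_components_of X)" "finite (path_components_of Y)"
    and "card (path_components_of X) = card (path_components_of Y)"
  obtains \<Phi> \<Psi> where "continuous_map X Y \<Phi>" "continuous_map Y X \<Psi>"
    "path_components_agree X Y (correspondence X Y \<Phi> \<Psi>)"
proof -
  obtain \<sigma> where \<sigma>: "bij_betw \<sigma> (path_components_of X) (path_components_of Y)"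
    using assms(3-5) finite_same_card_bij by blast
  then have \<tau>: "bij_betw (inv_into (path_components_of X) \<sigma>) (path_components_of Y) (path_components_of X)"
    by (rule bij_betw_inv_into)
  obtain \<Phi> where \<Phi>: "continuous_map X Y \<Phi>"
    "\<And>x. x \<in> topspace X \<Longrightarrow> \<Phi> x \<in> topspace Y \<and> path_component_of_set Y (\<Phi> x) = \<sigma> (path_component_of_set X x)"
    using continuous_map_into_path_components[OF assms(1) bij_betw_imp_funcset[OF \<sigma>]] by blast
  obtain \<Psi> where \<Psi>: "continuous_map Y X \<Psi>"
    "\<And>y. y \<in> topspace Y \<Longrightarrow> \<Psi> y \<in> topspace X \<and>
       path_component_of_set X (\<Psi> y) = inv_into (path_components_of X) \<sigma> (path_component_of_set Y y)"
    using continuous_map_into_path_components[OF assms(2) bij_betw_imp_funcset[OF \<tau>]] by blast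
  have \<Psi>': "\<sigma> (path_component_of_set X (\<Psi> y)) = path_component_of_set Y y" if "y \<in> topspace Y" for y
    using \<Psi>(2)[OF that] \<sigma> that by (simp add: bij_betw_def f_inv_into_f path_component_in_path_components_of)
  have matched: "x \<in> topspace X \<and> y \<in> topspace Y \<and> \<sigma> (path_component_of_set X x) = path_component_of_set Y y"
    if "(x, y) \<in> correspondence X Y \<Phi> \<Psi>" for x y
    using that \<Phi>(2) \<Psi>(2) \<Psi>' unfolding correspondence_def by auto
  have "path_component_of X x x' \<longleftrightarrow> path_component_of Y y y'"
    if "(x, y) \<in> correspondence X Y \<Phi> \<Psi>" "(x', y') \<in> correspondence X Y \<Phi> \<Psi>" for x y x' y'
  proof -
    have x: "x \<in> topspace X" "x' \<in> topspace X" and y: "y \<in> topspace Y" "y' \<in> topspace Y"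
      using matched that by blast+
    have "path_component_of X x x' \<longleftrightarrow> path_component_of_set X x = path_component_of_set X x'"
      using x by (simp add: path_component_of_set_eq_iff)
    also have "\<dots> \<longleftrightarrow> \<sigma> (path_component_of_set X x) = \<sigma> (path_component_of_set X x')"
      using x bij_betw_imp_inj_on[OF \<sigma>] by (simp add: inj_on_eq_iff path_component_in_path_components_of)
    also have "\<dots> \<longleftrightarrow> path_component_of Y y y'"
      using matched that y by (simp add: path_component_of_set_eq_iff)
    finally show ?thesis .
  qed
  then show ?thesis
    using that \<Phi>(1) \<Psi>(1) unfolding path_components_agree_def by blast
qed

lemma ediff_finite_imp_infinity_iff:
  assumes "ediff a b / 2 < \<infinity>"
  shows "a = \<infinity> \<longleftrightarrow> b = \<infinity>"
  using assms by (cases a; cases b) (auto simp: ediff_def)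

lemma ediff_half_le:
  assumes "0 \<le> a" "a \<le> ereal A" "0 \<le> b" "b \<le> ereal B"
  shows "ediff a b / 2 \<le> ereal (A + B)"
  using assms by (cases a; cases b) (auto simp: ediff_def)

lemma istopology_reeb:
  "istopology (\<lambda>U. U \<subseteq> reeb_space G \<and>
     (\<forall>e \<in> edges G. openin (top_of_set {0..1}) {t \<in> {0..1}. edge_map G e t \<in> U}))"
  (is "istopology ?open")
  unfolding istopology_def
proof (rule conjI; intro allI impI)
  fix S T assume "?open S" "?open T"
  moreover have "{t \<in> {0..1}. edge_map G e t \<in> S \<inter> T} =
      {t \<in> {0..1}. edge_map G e t \<in> S} \<inter> {t \<in> {0..1}. edge_map G e t \<in> T}" for e
    by auto
  ultimately show "?open (S \<inter> T)"
    by (auto intro!: openin_Int)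
next
  fix K assume "\<forall>U \<in> K. ?open U"
  moreover have "{t \<in> {0..1}. edge_map G e t \<in> \<Union>K} = (\<Union>U \<in> K. {t \<in> {0..1}. edge_map G e t \<in> U})" for e
    by auto
  ultimately show "?open (\<Union>K)"
    by (auto intro!: openin_Union)
qed

lemma openin_reeb_top:
  "openin (reeb_top G) U \<longleftrightarrow> U \<subseteq> reeb_space G \<and>
     (\<forall>e \<in> edges G. openin (top_of_set {0..1}) {t \<in> {0..1}. edge_map G e t \<in> U})"
  unfolding reeb_top_def using istopology_reeb[of G] by simp

lemma edge_map_in_reeb_space:
  assumes "constructible_reeb G" "e \<in> edges G" "t \<in> {0..1}"
  shows "edge_map G e t \<in> reeb_space G"
  using assms by (auto simp: edge_map_def reeb_space_def constructible_reeb_def)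

lemma topspace_reeb_top:
  assumes "constructible_reeb G"
  shows "topspace (reeb_top G) = reeb_space G"
proof (rule antisym)
  show "topspace (reeb_top G) \<subseteq> reeb_space G"
    using openin_topspace[of "reeb_top G"] by (simp only: openin_reeb_top)
  have "{t \<in> {0..1}. edge_map G e t \<in> reeb_space G} = topspace (top_of_set {0..1})" if "e \<in> edges G" for e
    using edge_map_in_reeb_space[OF assms that] by auto
  then have "openin (reeb_top G) (reeb_space G)"
    by (simp add: openin_reeb_top)
  then show "reeb_space G \<subseteq> topspace (reeb_top G)"
    by (rule openin_subset)
qed

lemma pathin_edge_map:
  assumes "constructible_reeb G" "e \<in> edges G"
  shows "pathin (reeb_top G) (edge_map G e)"
  using assms edge_map_in_reeb_space[OF assms]
  by (auto simp: pathin_def continuous_map_def topspace_reeb_top openin_reeb_top)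

lemma path_component_of_edge_map:
  assumes "constructible_reeb G" "e \<in> edges G" "t \<in> {0..1}"
  shows "path_component_of (reeb_top G) (Inl (lo G e)) (edge_map G e t)"
proof -
  have "path_connectedin (reeb_top G) (edge_map G e ` {0..1})"
    by (rule path_connectedin_path_image[OF pathin_edge_map[OF assms(1,2)]])
  moreover have "Inl (lo G e) \<in> edge_map G e ` {0..1}"
    by (rule image_eqI[of _ _ 0]) (auto simp: edge_map_def)
  ultimately show ?thesis
    using assms(3) unfolding path_component_of by blast
qed

lemma exists_vertex_path_component_of:
  assumes "constructible_reeb G" "x \<in> reeb_space G"
  obtains v where "v \<in> verts G" "path_component_of (reeb_top G) (Inl v) x"
proof (cases x)
  case (Inl v)
  then show ?thesis
    using assms that path_component_of_refl topspace_reeb_top by (fastforce simp: reeb_space_def)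
next
  case (Inr p)
  then obtain e t where "e \<in> edges G" "t \<in> {0<..<1}" "x = edge_map G e t"
    using assms(2) by (auto simp: reeb_space_def edge_map_def)
  then show ?thesis
    using assms(1) that path_component_of_edge_map[of G e t]
    by (auto simp: constructible_reeb_def)
qed

lemma openin_path_component_of_reeb:
  assumes "constructible_reeb G"
  shows "openin (reeb_top G) (path_component_of_set (reeb_top G) x)"
  unfolding openin_reeb_top
proof (intro conjI ballI)
  show "path_component_of_set (reeb_top G) x \<subseteq> reeb_space G"
    using path_component_of_subset_topspace[of "reeb_top G" x] by (simp add: topspace_reeb_top[OF assms])
  fix e assume e: "e \<in> edges G"
  let ?P = "path_component_of_set (reeb_top G) x"
  have same: "edge_map G e t \<in> ?P \<longleftrightarrow> Inl (lo G e) \<in> ?P" if "t \<in> {0..1}" for t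
    using path_component_of_edge_map[OF assms e that]
    by simp (meson path_component_of_sym path_component_of_trans)
  show "openin (top_of_set {0..1}) {t \<in> {0..1}. edge_map G e t \<in> ?P}"
  proof (cases "Inl (lo G e) \<in> ?P")
    case True
    then have "{t \<in> {0..1}. edge_map G e t \<in> ?P} = topspace (top_of_set {0..1})"
      using same by auto
    then show ?thesis
      by (metis openin_topspace)
  next
    case False
    then have "{t \<in> {0..1}. edge_map G e t \<in> ?P} = {}"
      using same by auto
    then show ?thesis
      by (metis openin_empty)
  qed
qed

lemma finite_path_components_of_reeb:
  assumes "constructible_reeb G"
  shows "finite (path_components_of (reeb_top G))"
proof -
  have "path_components_of (reeb_top G) \<subseteq> (\<lambda>v. path_component_of_set (reeb_top G) (Inl v)) ` verts G"
  proof
    fix C assume "C \<in> path_components_of (reeb_top G)"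
    then obtain x where x: "x \<in> reeb_space G" "C = path_component_of_set (reeb_top G) x"
      unfolding path_components_of_def topspace_reeb_top[OF assms] by auto
    then obtain v where "v \<in> verts G" "path_component_of (reeb_top G) (Inl v) x"
      using exists_vertex_path_component_of[OF assms] by blast
    then show "C \<in> (\<lambda>v. path_component_of_set (reeb_top G) (Inl v)) ` verts G"
      using x by (auto simp: path_component_of_equiv)
  qed
  then show ?thesis
    using assms finite_surj by (auto simp: constructible_reeb_def)
qed

text \<open>A sum rather than \<open>Max\<close>, so that an empty vertex set needs no special treatment.\<close>

definition height_bound :: "('v, 'e) rgraph \<Rightarrow> real" where
  "height_bound G = (\<Sum>v \<in> verts G. \<bar>ht G v\<bar>)"

lemma height_bound_nonneg: "0 \<le> height_bound G"
  unfolding height_bound_def by (simp add: sum_nonneg)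

lemma abs_reeb_fun_le_height_bound:
  assumes G: "constructible_reeb G" and x: "x \<in> reeb_space G"
  shows "\<bar>reeb_fun G x\<bar> \<le> height_bound G"
proof -
  have vert: "\<bar>ht G v\<bar> \<le> height_bound G" if "v \<in> verts G" for v
    using G that unfolding height_bound_def constructible_reeb_def by (auto intro: member_le_sum)
  show ?thesis
  proof (cases x)
    case (Inl v)
    then show ?thesis
      using x vert by (auto simp: reeb_space_def reeb_fun_def)
  next
    case (Inr p)
    then obtain e t where et: "x = Inr (e, t)" "e \<in> edges G" "0 < t" "t < 1"
      using x by (auto simp: reeb_space_def)
    then have ends: "\<bar>ht G (lo G e)\<bar> \<le> height_bound G" "\<bar>ht G (hi G e)\<bar> \<le> height_bound G"
      using G vert by (auto simp: constructible_reeb_def)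
    have "\<bar>(1 - t) * ht G (lo G e) + t * ht G (hi G e)\<bar> \<le> (1 - t) * \<bar>ht G (lo G e)\<bar> + t * \<bar>ht G (hi G e)\<bar>"
      using et abs_triangle_ineq[of "(1 - t) * ht G (lo G e)" "t * ht G (hi G e)"] by (simp add: abs_mult)
    also have "\<dots> \<le> (1 - t) * height_bound G + t * height_bound G"
      using et ends by (intro add_mono mult_left_mono) auto
    finally show ?thesis
      using et by (simp add: reeb_fun_def algebra_simps)
  qed
qed

lemma height_range_of_pathin:
  assumes G: "constructible_reeb G" and p: "pathin (reeb_top G) p"
  shows "0 \<le> (SUP t \<in> {0..1}. reeb_fun G (p t)) - (INF t \<in> {0..1}. reeb_fun G (p t))"
    and "(SUP t \<in> {0..1}. reeb_fun G (p t)) - (INF t \<in> {0..1}. reeb_fun G (p t)) \<le> 2 * height_bound G"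
proof -
  let ?S = "(\<lambda>t. reeb_fun G (p t)) ` {0..1}"
  have "p t \<in> reeb_space G" if "t \<in> {0..1}" for t
    using p that topspace_reeb_top[OF G] unfolding pathin_def continuous_map_def by auto
  then have bound: "\<bar>s\<bar> \<le> height_bound G" if "s \<in> ?S" for s
    using that abs_reeb_fun_le_height_bound[OF G] by auto
  then have "bdd_above ?S" "bdd_below ?S"
    by (meson abs_le_D1 abs_le_D2 bdd_aboveI bdd_belowI minus_le_iff)+
  moreover have "reeb_fun G (p 0) \<in> ?S"
    by auto
  ultimately have "Inf ?S \<le> Sup ?S"
    by (meson cInf_lower cSup_upper order_trans)
  moreover have "Sup ?S \<le> height_bound G" "- height_bound G \<le> Inf ?S"
    using bound by (force intro: cSup_least cInf_greatest simp: abs_le_iff)+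
  ultimately show "0 \<le> Sup ?S - Inf ?S" "Sup ?S - Inf ?S \<le> 2 * height_bound G"
    by simp_all
qed

lemma reeb_dist_bounds:
  assumes "constructible_reeb G" "path_component_of (reeb_top G) u v"
  shows "0 \<le> reeb_dist G u v" "reeb_dist G u v \<le> ereal (2 * height_bound G)"
proof -
  obtain p where "pathin (reeb_top G) p" "p 0 = u" "p 1 = v"
    using assms(2) by (auto simp: path_component_of_def)
  then show "reeb_dist G u v \<le> ereal (2 * height_bound G)"
    unfolding reeb_dist_def using height_range_of_pathin[OF assms(1)] by (intro INF_lower2) auto
  show "0 \<le> reeb_dist G u v"
    unfolding reeb_dist_def using height_range_of_pathin[OF assms(1)] by (intro INF_greatest) auto
qed

lemma reeb_dist_eq_infinity_iff:
  assumes "constructible_reeb G"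
  shows "reeb_dist G u v = \<infinity> \<longleftrightarrow> \<not> path_component_of (reeb_top G) u v"
proof
  assume "reeb_dist G u v = \<infinity>"
  then show "\<not> path_component_of (reeb_top G) u v"
    using reeb_dist_bounds(2)[OF assms] by force
next
  assume "\<not> path_component_of (reeb_top G) u v"
  then have no_path: "{p. pathin (reeb_top G) p \<and> p 0 = u \<and> p 1 = v} = {}"
    by (auto simp: path_component_of_def)
  show "reeb_dist G u v = \<infinity>"
    unfolding reeb_dist_def no_path INF_empty by (simp add: top_ereal_def)
qed

lemma distortion_finite_iff:
  assumes G: "constructible_reeb G" and H: "constructible_reeb H"
  shows "distortion G H \<Phi> \<Psi> < \<infinity> \<longleftrightarrow>
    path_components_agree (reeb_top G) (reeb_top H) (correspondence (reeb_top G) (reeb_top H) \<Phi> \<Psi>)"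
    (is "_ \<longleftrightarrow> path_components_agree ?X ?Y ?C")
proof -
  define \<delta> where "\<delta> x y x' y' = ediff (reeb_dist G x x') (reeb_dist H y y') / 2" for x y x' y'
  have distortion: "distortion G H \<Phi> \<Psi> = (SUP ((x, y), (x', y')) \<in> ?C \<times> ?C. \<delta> x y x' y')"
    by (simp add: distortion_def correspondence_def \<delta>_def case_prod_beta Let_def)
  show ?thesis
  proof
    assume finite: "distortion G H \<Phi> \<Psi> < \<infinity>"
    have "path_component_of ?X x x' \<longleftrightarrow> path_component_of ?Y y y'"
      if "(x, y) \<in> ?C" "(x', y') \<in> ?C" for x y x' y'
    proof -
      have "\<delta> x y x' y' \<le> distortion G H \<Phi> \<Psi>"
        unfolding distortion using that by (intro SUP_upper2[of "((x, y), (x', y'))"]) auto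
      then have "\<delta> x y x' y' < \<infinity>"
        using finite by (rule le_less_trans)
      then have "reeb_dist G x x' = \<infinity> \<longleftrightarrow> reeb_dist H y y' = \<infinity>"
        unfolding \<delta>_def by (rule ediff_finite_imp_infinity_iff)
      then show ?thesis
        by (simp add: reeb_dist_eq_infinity_iff[OF G] reeb_dist_eq_infinity_iff[OF H])
    qed
    then show "path_components_agree ?X ?Y ?C"
      unfolding path_components_agree_def by blast
  next
    assume agree: "path_components_agree ?X ?Y ?C"
    have "\<delta> x y x' y' \<le> ereal (2 * height_bound G + 2 * height_bound H)"
      if "(x, y) \<in> ?C" "(x', y') \<in> ?C" for x y x' y'
    proof (cases "path_component_of ?X x x'")
      case True
      then have "path_component_of ?Y y y'"
        using path_components_agreeD[OF agree that] by simp
      with True show ?thesis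
        unfolding \<delta>_def using reeb_dist_bounds[OF G] reeb_dist_bounds[OF H] by (intro ediff_half_le)
    next
      case False
      then have "\<not> path_component_of ?Y y y'"
        using path_components_agreeD[OF agree that] by simp
      with False show ?thesis
        unfolding \<delta>_def
        using height_bound_nonneg[of G] height_bound_nonneg[of H]
        by (simp add: reeb_dist_eq_infinity_iff[OF G, symmetric] reeb_dist_eq_infinity_iff[OF H, symmetric] ediff_def)
    qed
    then have "distortion G H \<Phi> \<Psi> \<le> ereal (2 * height_bound G + 2 * height_bound H)"
      unfolding distortion by (intro SUP_least) auto
    then show "distortion G H \<Phi> \<Psi> < \<infinity>"
      by (rule le_less_trans) simp
  qed
qed

lemma SUP_height_difference_le:
  assumes "constructible_reeb G" "constructible_reeb H"
    and "\<And>z. z \<in> A \<Longrightarrow> a z \<in> reeb_space G \<and> b z \<in> reeb_space H"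
  shows "(SUP z \<in> A. ereal \<bar>reeb_fun G (a z) - reeb_fun H (b z)\<bar>) \<le> ereal (height_bound G + height_bound H)"
proof (rule SUP_least)
  fix z assume "z \<in> A"
  then have "\<bar>reeb_fun G (a z)\<bar> \<le> height_bound G" "\<bar>reeb_fun H (b z)\<bar> \<le> height_bound H"
    using assms abs_reeb_fun_le_height_bound by blast+
  then show "ereal \<bar>reeb_fun G (a z) - reeb_fun H (b z)\<bar> \<le> ereal (height_bound G + height_bound H)"
    by simp
qed

lemma fd_dist_finite_iff:
  assumes G: "constructible_reeb G" and H: "constructible_reeb H"
  shows "fd_dist G H < \<infinity> \<longleftrightarrow>
    (\<exists>\<Phi> \<Psi>. continuous_map (reeb_top G) (reeb_top H) \<Phi> \<and> continuous_map (reeb_top H) (reeb_top G) \<Psi> \<and>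
      path_components_agree (reeb_top G) (reeb_top H) (correspondence (reeb_top G) (reeb_top H) \<Phi> \<Psi>))"
    (is "_ \<longleftrightarrow> (\<exists>\<Phi> \<Psi>. ?maps_GH \<Phi> \<and> ?maps_HG \<Psi> \<and> ?agree \<Phi> \<Psi>)")
proof -
  define cost where "cost \<Phi> \<Psi> = max (distortion G H \<Phi> \<Psi>)
     (max (SUP x \<in> topspace (reeb_top G). ereal \<bar>reeb_fun G x - reeb_fun H (\<Phi> x)\<bar>)
          (SUP y \<in> topspace (reeb_top H). ereal \<bar>reeb_fun G (\<Psi> y) - reeb_fun H y\<bar>))" for \<Phi> \<Psi>
  have cost_finite_iff: "cost \<Phi> \<Psi> < \<infinity> \<longleftrightarrow> ?agree \<Phi> \<Psi>" if "?maps_GH \<Phi>" "?maps_HG \<Psi>" for \<Phi> \<Psi>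
  proof -
    have "(SUP x \<in> topspace (reeb_top G). ereal \<bar>reeb_fun G x - reeb_fun H (\<Phi> x)\<bar>)
        \<le> ereal (height_bound G + height_bound H)"
      using that SUP_height_difference_le[OF G H, of "topspace (reeb_top G)" "\<lambda>x. x" \<Phi>]
      by (simp add: continuous_map_def topspace_reeb_top[OF G] topspace_reeb_top[OF H] Pi_iff)
    then have heights_GH: "(SUP x \<in> topspace (reeb_top G). ereal \<bar>reeb_fun G x - reeb_fun H (\<Phi> x)\<bar>) < \<infinity>"
      by (rule le_less_trans) simp
    have "(SUP y \<in> topspace (reeb_top H). ereal \<bar>reeb_fun G (\<Psi> y) - reeb_fun H y\<bar>)
        \<le> ereal (height_bound G + height_bound H)"
      using that SUP_height_difference_le[OF G H, of "topspace (reeb_top H)" \<Psi> "\<lambda>y. y"]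
      by (simp add: continuous_map_def topspace_reeb_top[OF G] topspace_reeb_top[OF H] Pi_iff)
    then have heights_HG: "(SUP y \<in> topspace (reeb_top H). ereal \<bar>reeb_fun G (\<Psi> y) - reeb_fun H y\<bar>) < \<infinity>"
      by (rule le_less_trans) simp
    show ?thesis
      unfolding cost_def distortion_finite_iff[OF G H, symmetric] using heights_GH heights_HG by (auto simp: max_def)
  qed
  have "fd_dist G H = (INF (\<Phi>, \<Psi>) \<in> {(\<Phi>, \<Psi>). ?maps_GH \<Phi> \<and> ?maps_HG \<Psi>}. cost \<Phi> \<Psi>)"
    by (simp add: fd_dist_def cost_def)
  then have "fd_dist G H < \<infinity> \<longleftrightarrow> (\<exists>(\<Phi>, \<Psi>) \<in> {(\<Phi>, \<Psi>). ?maps_GH \<Phi> \<and> ?maps_HG \<Psi>}. cost \<Phi> \<Psi> < \<infinity>)"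
    by (simp only: INF_less_iff) auto
  then show ?thesis
    using cost_finite_iff by auto
qed

theorem mainTheorem14:
  fixes G :: "('v, 'e) rgraph" and H :: "('w, 'd) rgraph"
  assumes "constructible_reeb G" and "constructible_reeb H"
  shows "fd_dist G H = \<infinity> \<longleftrightarrow>
         card (path_components_of (reeb_top G)) \<noteq> card (path_components_of (reeb_top H))"
proof -
  note finite = finite_path_components_of_reeb[OF assms(1)] finite_path_components_of_reeb[OF assms(2)]
  have "fd_dist G H < \<infinity> \<longleftrightarrow>
      card (path_components_of (reeb_top G)) = card (path_components_of (reeb_top H))"
  proof
    assume "fd_dist G H < \<infinity>"
    then obtain \<Phi> \<Psi> where \<Phi>: "continuous_map (reeb_top G) (reeb_top H) \<Phi>"
      and \<Psi>: "continuous_map (reeb_top H) (reeb_top G) \<Psi>"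
      and agree: "path_components_agree (reeb_top G) (reeb_top H) (correspondence (reeb_top G) (reeb_top H) \<Phi> \<Psi>)"
      unfolding fd_dist_finite_iff[OF assms] by blast
    show "card (path_components_of (reeb_top G)) = card (path_components_of (reeb_top H))"
      using continuous_map_image_subset_topspace[OF \<Phi>] continuous_map_image_subset_topspace[OF \<Psi>]
      by (intro card_path_components_of_eq_if_agree[OF _ _ agree finite]) blast+
  next
    assume "card (path_components_of (reeb_top G)) = card (path_components_of (reeb_top H))"
    then obtain \<Phi> \<Psi> where "continuous_map (reeb_top G) (reeb_top H) \<Phi>" "continuous_map (reeb_top H) (reeb_top G) \<Psi>"
      "path_components_agree (reeb_top G) (reeb_top H) (correspondence (reeb_top G) (reeb_top H) \<Phi> \<Psi>)"
      by (rule exists_maps_with_agreeing_path_components[OF openin_path_component_of_reeb[OF assms(1)]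
          openin_path_component_of_reeb[OF assms(2)] finite])
    then show "fd_dist G H < \<infinity>"
      unfolding fd_dist_finite_iff[OF assms] by blast
  qed
  then show ?thesis
    by simp blast
qed

end
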